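(* Let $G$ be a group, $N$ a normal subgroup, $\Gamma=G/N$. Let $d_2\colon\mathrm{H}^1(N)^G\to\mathrm{H}^2(\Gamma)$ be the transgression map of the five-term exact sequence $0\to\mathrm{H}^1(\Gamma)\to\mathrm{H}^1(G)\to\mathrm{H}^1(N)^G\xrightarrow{d_2}\mathrm{H}^2(\Gamma)\to\mathrm{H}^2(G)$. Assume that $\operatorname{Ker}(c^3_\Gamma\colon\mathrm{H}^3_b(\Gamma)\to\mathrm{H}^3(\Gamma))$ and $\mathrm{H}^2(\Gamma)/d_2(\mathrm{H}^1(N)^G)$ are both finite dimensional. Then for every normal subgroup $L$ of $G$ with $L\geqslant N$, $\dim_{\mathbb{R}}\mathcal{W}(G,L,N)<\infty$. In particular, if $\mathrm{H}^3_b(\Gamma)$ and $\mathrm{H}^2(\Gamma)$ are finite dimensional, then $\dim_{\mathbb{R}}\mathcal{W}(G,L,N)<\infty$ for every normal subgroup $L\geqslant N$ of $G$.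
   Context: All (bounded) cohomology is with trivial real coefficients; $\mathrm{H}^*_b$ is bounded cohomology (cohomology of bounded inhomogeneous cochains) and $c^n_\Gamma$ is the comparison map induced by inclusion of bounded cochains. $\mathrm{Q}(N)^G$: homogeneous quasimorphisms on $N$ invariant under $G$-conjugation; $\mathrm{H}^1(N)^G$: $G$-invariant homomorphisms $N\to\mathbb{R}$; $\mathcal{W}(G,L,N)=\mathrm{Q}(N)^G/(\mathrm{H}^1(N)^G+\{\psi|_N:\psi\in\mathrm{Q}(L)^G\})$. *)

theory Defs
  imports "HOL-Algebra.Algebra"
begin

text \<open>An n-cochain on a group Gamma is a function Gamma^n -> R; we represent it as a function
  on lists which vanishes outside the lists of length n with entries in the carrier.\<close>

definition cochains :: "('a, 'b) monoid_scheme \<Rightarrow> nat \<Rightarrow> ('a list \<Rightarrow> real) set" where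
  "cochains \<Gamma> n = {f. \<forall>xs. f xs \<noteq> 0 \<longrightarrow> length xs = n \<and> set xs \<subseteq> carrier \<Gamma>}"

definition bounded_cochains :: "('a, 'b) monoid_scheme \<Rightarrow> nat \<Rightarrow> ('a list \<Rightarrow> real) set" where
  "bounded_cochains \<Gamma> n = {f \<in> cochains \<Gamma> n. \<exists>C. \<forall>xs. \<bar>f xs\<bar> \<le> C}"

text \<open>Coboundary delta : C^n -> C^(n+1) (trivial coefficients):
  (delta f)(g_1,...,g_(n+1)) = f(g_2,...,g_(n+1))
     + sum_(i=1..n) (-1)^i f(g_1,...,g_i g_(i+1),...,g_(n+1)) + (-1)^(n+1) f(g_1,...,g_n).\<close>

definition coboundary :: "('a, 'b) monoid_scheme \<Rightarrow> nat \<Rightarrow> ('a list \<Rightarrow> real) \<Rightarrow> ('a list \<Rightarrow> real)" where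
  "coboundary \<Gamma> n f = (\<lambda>xs. if length xs = Suc n \<and> set xs \<subseteq> carrier \<Gamma> then
       f (tl xs)
     + (\<Sum>i<n. (-1) ^ (i + 1) * f (take i xs @ [xs ! i \<otimes>\<^bsub>\<Gamma>\<^esub> xs ! (i + 1)] @ drop (i + 2) xs))
     + (-1) ^ (n + 1) * f (butlast xs)
     else 0)"

definition cocycles :: "('a, 'b) monoid_scheme \<Rightarrow> nat \<Rightarrow> ('a list \<Rightarrow> real) set" where
  "cocycles \<Gamma> n = {f \<in> cochains \<Gamma> n. coboundary \<Gamma> n f = (\<lambda>_. 0)}"

definition coboundaries :: "('a, 'b) monoid_scheme \<Rightarrow> nat \<Rightarrow> ('a list \<Rightarrow> real) set" where
  "coboundaries \<Gamma> n = (case n of 0 \<Rightarrow> {\<lambda>_. 0} | Suc m \<Rightarrow> coboundary \<Gamma> m ` cochains \<Gamma> m)"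

definition bounded_cocycles :: "('a, 'b) monoid_scheme \<Rightarrow> nat \<Rightarrow> ('a list \<Rightarrow> real) set" where
  "bounded_cocycles \<Gamma> n = {f \<in> bounded_cochains \<Gamma> n. coboundary \<Gamma> n f = (\<lambda>_. 0)}"

definition bounded_coboundaries :: "('a, 'b) monoid_scheme \<Rightarrow> nat \<Rightarrow> ('a list \<Rightarrow> real) set" where
  "bounded_coboundaries \<Gamma> n =
     (case n of 0 \<Rightarrow> {\<lambda>_. 0} | Suc m \<Rightarrow> coboundary \<Gamma> m ` bounded_cochains \<Gamma> m)"

definition fin_dim_quot :: "('x \<Rightarrow> real) set \<Rightarrow> ('x \<Rightarrow> real) set \<Rightarrow> bool" where
  "fin_dim_quot V W \<longleftrightarrow> (\<exists>F. finite F \<and> F \<subseteq> V \<and>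
     (\<forall>v\<in>V. \<exists>w\<in>W. \<exists>c. v = (\<lambda>x. w x + (\<Sum>f\<in>F. c f * f x))))"

text \<open>H^n(Gamma) = Z^n/B^n, H^n_b(Gamma) = Z^n_b/B^n_b, and
  Ker(c^n_Gamma) = (Z^n_b \<inter> B^n)/B^n_b.\<close>

definition fin_dim_H :: "('a, 'b) monoid_scheme \<Rightarrow> nat \<Rightarrow> bool" where
  "fin_dim_H \<Gamma> n \<longleftrightarrow> fin_dim_quot (cocycles \<Gamma> n) (coboundaries \<Gamma> n)"

definition fin_dim_Hb :: "('a, 'b) monoid_scheme \<Rightarrow> nat \<Rightarrow> bool" where
  "fin_dim_Hb \<Gamma> n \<longleftrightarrow> fin_dim_quot (bounded_cocycles \<Gamma> n) (bounded_coboundaries \<Gamma> n)"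

definition fin_dim_ker_comparison :: "('a, 'b) monoid_scheme \<Rightarrow> nat \<Rightarrow> bool" where
  "fin_dim_ker_comparison \<Gamma> n \<longleftrightarrow>
     fin_dim_quot (bounded_cocycles \<Gamma> n \<inter> coboundaries \<Gamma> n) (bounded_coboundaries \<Gamma> n)"

text \<open>Functions on a subgroup H are represented as functions on the ambient type vanishing off H.\<close>

definition inv_homs :: "('g, 'b) monoid_scheme \<Rightarrow> 'g set \<Rightarrow> ('g \<Rightarrow> real) set" where
  "inv_homs G H = {f. (\<forall>x. x \<notin> H \<longrightarrow> f x = 0)
      \<and> (\<forall>x\<in>H. \<forall>y\<in>H. f (x \<otimes>\<^bsub>G\<^esub> y) = f x + f y)
      \<and> (\<forall>g\<in>carrier G. \<forall>x\<in>H. f (g \<otimes>\<^bsub>G\<^esub> x \<otimes>\<^bsub>G\<^esub> inv\<^bsub>G\<^esub> g) = f x)}"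

definition inv_hom_quasimorphisms :: "('g, 'b) monoid_scheme \<Rightarrow> 'g set \<Rightarrow> ('g \<Rightarrow> real) set" where
  "inv_hom_quasimorphisms G H = {f. (\<forall>x. x \<notin> H \<longrightarrow> f x = 0)
      \<and> (\<exists>D. \<forall>x\<in>H. \<forall>y\<in>H. \<bar>f (x \<otimes>\<^bsub>G\<^esub> y) - f x - f y\<bar> \<le> D)
      \<and> (\<forall>x\<in>H. \<forall>k::int. f (x [^]\<^bsub>G\<^esub> k) = of_int k * f x)
      \<and> (\<forall>g\<in>carrier G. \<forall>x\<in>H. f (g \<otimes>\<^bsub>G\<^esub> x \<otimes>\<^bsub>G\<^esub> inv\<^bsub>G\<^esub> g) = f x)}"

text \<open>W(G,L,N) = Q(N)^G / (H^1(N)^G + {psi|_N : psi \<in> Q(L)^G}).\<close>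

definition fin_dim_W :: "('g, 'b) monoid_scheme \<Rightarrow> 'g set \<Rightarrow> 'g set \<Rightarrow> bool" where
  "fin_dim_W G L N \<longleftrightarrow> fin_dim_quot (inv_hom_quasimorphisms G N)
     {(\<lambda>x. a x + (if x \<in> N then b x else 0)) | a b.
        a \<in> inv_homs G N \<and> b \<in> inv_hom_quasimorphisms G L}"

text \<open>For phi \<in> H^1(N)^G choose psi : G -> R with psi(n g) = phi(n) + psi(g); then
  (g,h) |-> psi(h) - psi(gh) + psi(g) descends to a 2-cocycle on G/N representing d_2(phi).\<close>

definition transgression_cocycles :: "('g, 'b) monoid_scheme \<Rightarrow> 'g set \<Rightarrow> ('g set list \<Rightarrow> real) set" where
  "transgression_cocycles G N = {c \<in> cochains (G Mod N) 2. \<exists>\<phi> \<psi>.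
      \<phi> \<in> inv_homs G N
    \<and> (\<forall>n\<in>N. \<forall>g\<in>carrier G. \<psi> (n \<otimes>\<^bsub>G\<^esub> g) = \<phi> n + \<psi> g)
    \<and> (\<forall>g\<in>carrier G. \<forall>h\<in>carrier G.
         c [r_coset G N g, r_coset G N h] = \<psi> h - \<psi> (g \<otimes>\<^bsub>G\<^esub> h) + \<psi> g)}"

text \<open>Preimage in Z^2(G/N) of d_2(H^1(N)^G).\<close>

definition d2_image_reps :: "('g, 'b) monoid_scheme \<Rightarrow> 'g set \<Rightarrow> ('g set list \<Rightarrow> real) set" where
  "d2_image_reps G N = {(\<lambda>xs. c xs + b xs) | c b.
      c \<in> transgression_cocycles G N \<and> b \<in> coboundaries (G Mod N) 2}"

definition fin_dim_H2_mod_d2 :: "('g, 'b) monoid_scheme \<Rightarrow> 'g set \<Rightarrow> bool" where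
  "fin_dim_H2_mod_d2 G N \<longleftrightarrow> fin_dim_quot (cocycles (G Mod N) 2) (d2_image_reps G N)"

end

theory Submission
  imports Defs "HOL-Library.Function_Algebras"
begin

(* Choose a representative s_A of every coset A of N and extend \<phi> \<in> Q(N)^G to G by
   \<psi>(n s_A) = \<phi>(n).  The 2-cochain c_\<phi>(A, B) = \<psi>(s_A) - \<psi>(s_A s_B) + \<psi>(s_B) on \<Gamma> = G/N has bounded
   coboundary, because \<phi> is a quasimorphism invariant under conjugation; so \<phi> \<mapsto> [\<delta> c_\<phi>] is a
   linear map from Q(N)^G to Ker c^3_\<Gamma>, and its kernel K has finite codimension.  For \<phi> \<in> K write
   \<delta> c_\<phi> = \<delta> \<beta>_\<phi> with \<beta>_\<phi> bounded; then \<phi> \<mapsto> c_\<phi> - \<beta>_\<phi> is a linear map from K to Z^2(\<Gamma>) modulo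
   d_2-representatives and bounded cochains, so a subspace of finite codimension of K consists of
   those \<phi> with c_\<phi> = c + \<delta>\<alpha> + \<beta>, where c is the transgression cocycle of some (\<phi>', \<psi>') and \<beta> is
   bounded.  For such \<phi> the function \<psi> - \<psi>' - \<alpha> \<circ> \<pi> is a quasimorphism on G; its homogenization
   restricted to L lies in Q(L)^G and agrees with \<phi> - \<phi>' on N. *)

lemma vector_space_real_fun: "vector_space (\<lambda>(r::real) (f::'x \<Rightarrow> real) x. r * f x)"
  by unfold_locales (auto simp: fun_eq_iff algebra_simps)

interpretation real_fun: vector_space "\<lambda>(r::real) (f::'x \<Rightarrow> real) x. r * f x"
  by (rule vector_space_real_fun)

interpretation real_fun_pair:
  vector_space_pair "\<lambda>(r::real) (f::'x \<Rightarrow> real) x. r * f x" "\<lambda>(r::real) (f::'y \<Rightarrow> real) x. r * f x" ..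

lemma sum_fun_apply: "(\<Sum>i\<in>I. f i) x = (\<Sum>i\<in>I. f i x)"
  by (induction I rule: infinite_finite_induct) auto

section \<open>Finite dimensional quotients\<close>

lemma fin_dim_quot_iff_span:
  "fin_dim_quot V W \<longleftrightarrow> (\<exists>F. finite F \<and> F \<subseteq> V \<and> (\<forall>v\<in>V. \<exists>w\<in>W. v - w \<in> real_fun.span F))"
proof -
  have key: "(\<exists>c. v = (\<lambda>x. w x + (\<Sum>f\<in>F. c f * f x))) \<longleftrightarrow> v - w \<in> real_fun.span F"
    if "finite F" for v w :: "'a \<Rightarrow> real" and F
  proof -
    have "(\<lambda>x. w x + (\<Sum>f\<in>F. c f * f x)) = w + (\<Sum>f\<in>F. (\<lambda>x. c f * f x))" for c
      by (simp add: fun_eq_iff sum_fun_apply)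
    then have "v = (\<lambda>x. w x + (\<Sum>f\<in>F. c f * f x)) \<longleftrightarrow> v - w = (\<Sum>f\<in>F. (\<lambda>x. c f * f x))" for c
      by (auto simp: diff_eq_eq add.commute)
    then show ?thesis unfolding real_fun.span_finite[OF that] by (auto simp: image_iff)
  qed
  show ?thesis
    unfolding fin_dim_quot_def by (simp add: key cong: conj_cong)
qed

lemma fin_dim_quot_mono:
  assumes "fin_dim_quot V W" and "W \<subseteq> W'"
  shows "fin_dim_quot V W'"
proof -
  obtain F where "finite F" "F \<subseteq> V" "\<forall>v\<in>V. \<exists>w\<in>W. v - w \<in> real_fun.span F"
    using assms(1) unfolding fin_dim_quot_iff_span by blast
  then show ?thesis
    unfolding fin_dim_quot_iff_span using assms(2) by (intro exI[of _ F]) blast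
qed

lemma fin_dim_quot_trans:
  assumes UV: "fin_dim_quot U V" and VW: "fin_dim_quot V W" and "V \<subseteq> U"
  shows "fin_dim_quot U W"
proof -
  obtain F where F: "finite F" "F \<subseteq> U" "\<forall>u\<in>U. \<exists>v\<in>V. u - v \<in> real_fun.span F"
    using UV unfolding fin_dim_quot_iff_span by blast
  obtain F' where F': "finite F'" "F' \<subseteq> V" "\<forall>v\<in>V. \<exists>w\<in>W. v - w \<in> real_fun.span F'"
    using VW unfolding fin_dim_quot_iff_span by blast
  have "\<exists>w\<in>W. u - w \<in> real_fun.span (F \<union> F')" if "u \<in> U" for u
  proof -
    obtain v w where "v \<in> V" "u - v \<in> real_fun.span F" "w \<in> W" "v - w \<in> real_fun.span F'"
      using F(3) F'(3) \<open>u \<in> U\<close> by meson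
    then have "(u - v) + (v - w) \<in> real_fun.span (F \<union> F')"
      using real_fun.span_mono[of F "F \<union> F'"] real_fun.span_mono[of F' "F \<union> F'"]
      by (intro real_fun.span_add) auto
    then show ?thesis using \<open>w \<in> W\<close> by auto
  qed
  moreover have "finite (F \<union> F')" "F \<union> F' \<subseteq> U" using F F' \<open>V \<subseteq> U\<close> by auto
  ultimately show ?thesis
    unfolding fin_dim_quot_iff_span by blast
qed

text \<open>\<open>T\<close> induces a linear map from \<open>V\<close> to the quotient of its target by \<open>B\<close>.\<close>

definition linear_modulo ::
    "('a \<Rightarrow> real) set \<Rightarrow> ('b \<Rightarrow> real) set \<Rightarrow> (('a \<Rightarrow> real) \<Rightarrow> 'b \<Rightarrow> real) \<Rightarrow> bool" where
  "linear_modulo V B T \<longleftrightarrow>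
     (\<forall>v\<in>V. \<forall>w\<in>V. \<forall>a b. T (\<lambda>x. a * v x + b * w x) - (\<lambda>x. a * T v x + b * T w x) \<in> B)"

lemma linear_moduloD:
  assumes T: "linear_modulo V B T" and "v \<in> V" and "w \<in> V"
  shows "T (v + w) - (T v + T w) \<in> B" and "T (\<lambda>x. c * v x) - (\<lambda>x. c * T v x) \<in> B"
    and "T (v - w) - (T v - T w) \<in> B"
proof -
  have lin: "T (\<lambda>x. a * v x + b * w x) - (\<lambda>x. a * T v x + b * T w x) \<in> B"
    if "v \<in> V" "w \<in> V" for v w a b
    using T that unfolding linear_modulo_def by blast
  show "T (v + w) - (T v + T w) \<in> B"
    using lin[OF \<open>v \<in> V\<close> \<open>w \<in> V\<close>, of 1 1] by (simp add: plus_fun_def)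
  show "T (\<lambda>x. c * v x) - (\<lambda>x. c * T v x) \<in> B"
    using lin[OF \<open>v \<in> V\<close> \<open>v \<in> V\<close>, of c 0] by simp
  show "T (v - w) - (T v - T w) \<in> B"
    using lin[OF \<open>v \<in> V\<close> \<open>w \<in> V\<close>, of 1 "-1"] by (simp add: fun_diff_def)
qed

lemma linear_modulo_subset: "linear_modulo V B T \<Longrightarrow> U \<subseteq> V \<Longrightarrow> linear_modulo U B T"
  unfolding linear_modulo_def by blast

lemma linear_modulo_mono: "linear_modulo V B T \<Longrightarrow> B \<subseteq> B' \<Longrightarrow> linear_modulo V B' T"
  unfolding linear_modulo_def by blast

lemma linear_imp_linear_modulo:
  assumes T: "Vector_Spaces.linear (\<lambda>r f x. r * f x) (\<lambda>r f x. r * f x) T" and B: "real_fun.subspace B"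
  shows "linear_modulo V B T"
proof -
  have "T (\<lambda>x. a * v x + b * w x) = (\<lambda>x. a * T v x + b * T w x)" for v w a b
  proof -
    have "T (\<lambda>x. a * v x + b * w x) = T ((\<lambda>x. a * v x) + (\<lambda>x. b * w x))"
      by (simp add: plus_fun_def)
    also have "\<dots> = (\<lambda>x. a * T v x) + (\<lambda>x. b * T w x)"
      using real_fun_pair.linear_add[OF T] real_fun_pair.linear_scale[OF T] by simp
    finally show ?thesis by (simp add: plus_fun_def)
  qed
  then show ?thesis
    unfolding linear_modulo_def using real_fun.subspace_0[OF B] by simp
qed

lemma linear_modulo_diff_primitive:
  assumes S: "Vector_Spaces.linear (\<lambda>r f x. r * f x) (\<lambda>r f x. r * f x) S"
    and \<delta>: "Vector_Spaces.linear (\<lambda>r f x. r * f x) (\<lambda>r f x. r * f x) \<delta>"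
    and V: "real_fun.subspace V" and P: "real_fun.subspace P"
    and \<beta>: "\<And>v. v \<in> V \<Longrightarrow> \<beta> v \<in> P" "\<And>v. v \<in> V \<Longrightarrow> \<delta> (\<beta> v) = \<delta> (S v)"
  shows "linear_modulo V (P \<inter> \<delta> -` {0}) (\<lambda>v. S v - \<beta> v)"
  unfolding linear_modulo_def
proof (intro ballI allI)
  fix v w a b assume v: "v \<in> V" and w: "w \<in> V"
  define u where "u = (\<lambda>x. a * v x + b * w x)"
  have u_eq: "u = (\<lambda>x. a * v x) + (\<lambda>x. b * w x)" unfolding u_def by (simp add: fun_eq_iff)
  have u: "u \<in> V"
    unfolding u_eq using v w by (intro real_fun.subspace_add[OF V] real_fun.subspace_scale[OF V, simplified])
  have Su: "S u = (\<lambda>x. a * S v x) + (\<lambda>x. b * S w x)"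
    unfolding u_eq using real_fun_pair.linear_add[OF S] real_fun_pair.linear_scale[OF S] by simp
  define \<omega> where "\<omega> = (\<lambda>x. a * \<beta> v x) + (\<lambda>x. b * \<beta> w x) - \<beta> u"
  have "\<omega> \<in> P"
    unfolding \<omega>_def using \<beta>(1) u v w
    by (intro real_fun.subspace_diff[OF P] real_fun.subspace_add[OF P] real_fun.subspace_scale[OF P, simplified]) auto
  moreover have "\<delta> \<omega> = 0"
    unfolding \<omega>_def using \<beta>(2) u v w Su
    by (simp add: real_fun_pair.linear_diff[OF \<delta>] real_fun_pair.linear_add[OF \<delta>] real_fun_pair.linear_scale[OF \<delta>])
  moreover have "S u - \<beta> u - (\<lambda>x. a * (S v - \<beta> v) x + b * (S w - \<beta> w) x) = \<omega>"
    unfolding \<omega>_def Su by (simp add: fun_eq_iff algebra_simps)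
  ultimately show "S u - \<beta> u - (\<lambda>x. a * (S v - \<beta> v) x + b * (S w - \<beta> w) x) \<in> P \<inter> \<delta> -` {0}"
    by simp
qed

lemma subspace_image_modulo:
  assumes U: "real_fun.subspace U" and B: "real_fun.subspace B" and T: "linear_modulo U B T"
  shows "real_fun.subspace {p. \<exists>u\<in>U. T u - p \<in> B}"
  unfolding real_fun.subspace_def
proof (intro conjI ballI allI)
  have "T 0 - 0 \<in> B"
    using linear_moduloD(2)[OF T real_fun.subspace_0[OF U] real_fun.subspace_0[OF U], where c=0]
    by (simp add: zero_fun_def)
  then show "0 \<in> {p. \<exists>u\<in>U. T u - p \<in> B}"
    using real_fun.subspace_0[OF U] by auto
next
  fix p q assume "p \<in> {p. \<exists>u\<in>U. T u - p \<in> B}" "q \<in> {p. \<exists>u\<in>U. T u - p \<in> B}"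
  then obtain v w where vw: "v \<in> U" "T v - p \<in> B" "w \<in> U" "T w - q \<in> B" by blast
  then have "(T (v + w) - (T v + T w)) + (T v - p) + (T w - q) \<in> B"
    using linear_moduloD(1)[OF T, of v w] by (intro real_fun.subspace_add[OF B]) auto
  moreover have "(T (v + w) - (T v + T w)) + (T v - p) + (T w - q) = T (v + w) - (p + q)"
    by (simp add: algebra_simps)
  ultimately have "T (v + w) - (p + q) \<in> B" by (simp only:)
  then show "p + q \<in> {p. \<exists>u\<in>U. T u - p \<in> B}" using vw real_fun.subspace_add[OF U] by auto
next
  fix c p assume "p \<in> {p. \<exists>u\<in>U. T u - p \<in> B}"
  then obtain v where v: "v \<in> U" "T v - p \<in> B" by blast
  then have "(T (\<lambda>x. c * v x) - (\<lambda>x. c * T v x)) + (\<lambda>x. c * (T v - p) x) \<in> B"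
    using linear_moduloD(2)[OF T v(1) v(1), of c] real_fun.subspace_scale[OF B, of "T v - p" c]
    by (intro real_fun.subspace_add[OF B]) auto
  moreover have "(T (\<lambda>x. c * v x) - (\<lambda>x. c * T v x)) + (\<lambda>x. c * (T v - p) x)
      = T (\<lambda>x. c * v x) - (\<lambda>x. c * p x)"
    by (rule ext) (simp add: algebra_simps)
  ultimately have "T (\<lambda>x. c * v x) - (\<lambda>x. c * p x) \<in> B" by (simp only:)
  then show "(\<lambda>x. c * p x) \<in> {p. \<exists>u\<in>U. T u - p \<in> B}"
    using v real_fun.subspace_scale[OF U, of v c] by auto
qed

text \<open>With \<open>F0\<close> finite spanning \<open>Z\<close> modulo \<open>B\<close>, the elements of \<open>span F0\<close> that are \<open>T\<close>-images
  modulo \<open>B\<close> have a finite basis; the span of chosen preimages of it complements the kernel.\<close>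

lemma fin_dim_quot_preimage:
  assumes V: "real_fun.subspace V" and B: "real_fun.subspace B" and T: "linear_modulo V B T"
    and TZ: "\<And>v. v \<in> V \<Longrightarrow> T v \<in> Z" and Z: "fin_dim_quot Z B"
  shows "fin_dim_quot V {v \<in> V. T v \<in> B}"
proof -
  obtain F0 where F0: "finite F0" "\<forall>z\<in>Z. \<exists>b\<in>B. z - b \<in> real_fun.span F0"
    using Z unfolding fin_dim_quot_iff_span by blast
  define P where "P = real_fun.span F0 \<inter> {p. \<exists>v\<in>V. T v - p \<in> B}"
  obtain E where E: "E \<subseteq> P" "real_fun.independent E" "P \<subseteq> real_fun.span E" "card E = real_fun.dim P"
    by (rule real_fun.basis_exists)
  have "finite E"
    using real_fun.independent_span_bound[OF F0(1) E(2)] E(1) unfolding P_def by blast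
  have "\<forall>e\<in>E. \<exists>v. v \<in> V \<and> T v - e \<in> B" using E(1) unfolding P_def by blast
  then obtain pre where pre: "\<And>e. e \<in> E \<Longrightarrow> pre e \<in> V" "\<And>e. e \<in> E \<Longrightarrow> T (pre e) - e \<in> B"
    using bchoice[of E "\<lambda>e v. v \<in> V \<and> T v - e \<in> B"] by blast
  define Y where "Y = real_fun.span (pre ` E)"
  have "pre ` E \<subseteq> V" using pre(1) by auto
  then have Y: "real_fun.subspace Y" "Y \<subseteq> V"
    unfolding Y_def by (simp_all add: real_fun.span_minimal[OF _ V])
  have lift: "real_fun.span E \<subseteq> {p. \<exists>y\<in>Y. T y - p \<in> B}"
  proof (rule real_fun.span_minimal)
    show "E \<subseteq> {p. \<exists>y\<in>Y. T y - p \<in> B}"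
      using pre unfolding Y_def by (auto intro: real_fun.span_base)
  qed (rule subspace_image_modulo[OF Y(1) B linear_modulo_subset[OF T Y(2)]])
  have "\<exists>u\<in>{v \<in> V. T v \<in> B}. v - u \<in> Y" if "v \<in> V" for v
  proof -
    obtain b where b: "b \<in> B" "T v - b \<in> real_fun.span F0" using F0(2) TZ[OF \<open>v \<in> V\<close>] by blast
    then have "T v - b \<in> P" unfolding P_def using \<open>v \<in> V\<close> by (auto intro!: bexI[of _ v])
    then obtain y where y: "y \<in> Y" "T y - (T v - b) \<in> B" using lift E(3) by blast
    have "y \<in> V" using y Y by blast
    have "v - y \<in> V" using \<open>y \<in> V\<close> \<open>v \<in> V\<close> by (rule real_fun.subspace_diff[OF V, rotated])
    have "(T (v - y) - (T v - T y)) - (T y - (T v - b)) + b \<in> B"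
      using linear_moduloD(3)[OF T \<open>v \<in> V\<close> \<open>y \<in> V\<close>]
      by (rule real_fun.subspace_add[OF B real_fun.subspace_diff[OF B _ y(2)] b(1)])
    moreover have "(T (v - y) - (T v - T y)) - (T y - (T v - b)) + b = T (v - y)"
      by (simp add: algebra_simps)
    ultimately have "T (v - y) \<in> B" by (simp only:)
    moreover have "v - (v - y) \<in> Y" using y by simp
    ultimately show ?thesis using \<open>v - y \<in> V\<close> by blast
  qed
  moreover have "finite (pre ` E)" using \<open>finite E\<close> by simp
  ultimately show ?thesis
    unfolding fin_dim_quot_iff_span Y_def using \<open>pre ` E \<subseteq> V\<close> by blast
qed

lemma fin_dim_quot_subspace:
  assumes "fin_dim_quot V W" and "real_fun.subspace S" and "S \<subseteq> V" and "real_fun.subspace W"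
  shows "fin_dim_quot S W"
proof -
  have "linear_modulo S W (\<lambda>v. v)"
    unfolding linear_modulo_def using real_fun.subspace_0[OF assms(4)] by (simp add: zero_fun_def)
  then have "fin_dim_quot S {s \<in> S. s \<in> W}"
    using assms by (intro fin_dim_quot_preimage[where Z = V]) auto
  then show ?thesis by (rule fin_dim_quot_mono) auto
qed

lemma coboundary_lin:
  "coboundary \<Gamma> n (\<lambda>xs. a * f xs + b * g xs)
     = (\<lambda>xs. a * coboundary \<Gamma> n f xs + b * coboundary \<Gamma> n g xs)"
proof
  fix xs
  show "coboundary \<Gamma> n (\<lambda>xs. a * f xs + b * g xs) xs = a * coboundary \<Gamma> n f xs + b * coboundary \<Gamma> n g xs"
  proof (cases "length xs = Suc n \<and> set xs \<subseteq> carrier \<Gamma>")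
    case True
    define h where "h i = take i xs @ [xs ! i \<otimes>\<^bsub>\<Gamma>\<^esub> xs ! (i + 1)] @ drop (i + 2) xs" for i
    have unfold: "coboundary \<Gamma> n F xs
        = F (tl xs) + (\<Sum>i<n. (-1) ^ (i + 1) * F (h i)) + (-1) ^ (n + 1) * F (butlast xs)" for F
      unfolding coboundary_def h_def using True by simp
    have "(\<Sum>i<n. (-1::real) ^ (i + 1) * (a * f (h i) + b * g (h i)))
        = a * (\<Sum>i<n. (-1) ^ (i + 1) * f (h i)) + b * (\<Sum>i<n. (-1) ^ (i + 1) * g (h i))"
      by (simp add: sum_distrib_left sum.distrib[symmetric] algebra_simps)
    then show ?thesis
      unfolding unfold by (simp add: algebra_simps)
  qed (auto simp: coboundary_def)
qed

lemma linear_coboundary: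
  "Vector_Spaces.linear (\<lambda>r f x. r * f x) (\<lambda>r f x. r * f x) (coboundary \<Gamma> n)"
  unfolding Vector_Spaces.linear_iff
  using vector_space_real_fun coboundary_lin[of \<Gamma> n 1 _ 1] coboundary_lin[of \<Gamma> n _ _ 0]
  by (simp add: plus_fun_def)

lemma coboundary_cochains: "coboundary \<Gamma> n f \<in> cochains \<Gamma> (Suc n)"
  unfolding cochains_def coboundary_def by auto

lemma coboundary_1_eval:
  "A \<in> carrier \<Gamma> \<Longrightarrow> B \<in> carrier \<Gamma> \<Longrightarrow>
   coboundary \<Gamma> 1 f [A, B] = f [B] - f [A \<otimes>\<^bsub>\<Gamma>\<^esub> B] + f [A]"
  unfolding coboundary_def by simp

lemma coboundary_2_eval:
  "A \<in> carrier \<Gamma> \<Longrightarrow> B \<in> carrier \<Gamma> \<Longrightarrow> C \<in> carrier \<Gamma> \<Longrightarrow>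
   coboundary \<Gamma> 2 f [A, B, C] = f [B, C] - f [A \<otimes>\<^bsub>\<Gamma>\<^esub> B, C] + f [A, B \<otimes>\<^bsub>\<Gamma>\<^esub> C] - f [A, B]"
  unfolding coboundary_def by (simp add: numeral_2_eq_2 lessThan_Suc)

lemma coboundary_3_eval:
  "A \<in> carrier \<Gamma> \<Longrightarrow> B \<in> carrier \<Gamma> \<Longrightarrow> C \<in> carrier \<Gamma> \<Longrightarrow> D \<in> carrier \<Gamma> \<Longrightarrow>
   coboundary \<Gamma> 3 f [A, B, C, D] = f [B, C, D] - f [A \<otimes>\<^bsub>\<Gamma>\<^esub> B, C, D] + f [A, B \<otimes>\<^bsub>\<Gamma>\<^esub> C, D]
      - f [A, B, C \<otimes>\<^bsub>\<Gamma>\<^esub> D] + f [A, B, C]"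
  unfolding coboundary_def by (simp add: numeral_3_eq_3 lessThan_Suc)

lemma (in monoid) coboundary_coboundary_2: "coboundary G 3 (coboundary G 2 f) = (\<lambda>_. 0)"
proof
  fix xs
  show "coboundary G 3 (coboundary G 2 f) xs = 0"
  proof (cases "length xs = 4 \<and> set xs \<subseteq> carrier G")
    case True
    then obtain A B C D where "xs = [A, B, C, D]"
      by (auto simp: numeral_eq_Suc length_Suc_conv)
    with True show ?thesis
      by (simp add: coboundary_3_eval coboundary_2_eval m_assoc)
  qed (auto simp: coboundary_def)
qed

lemma subspace_cochains: "real_fun.subspace (cochains \<Gamma> n)"
  unfolding real_fun.subspace_def cochains_def
proof (intro conjI ballI allI; clarsimp)
  fix f g :: "'a list \<Rightarrow> real" and xs
  assume "\<forall>xs. f xs \<noteq> 0 \<longrightarrow> length xs = n \<and> set xs \<subseteq> carrier \<Gamma>"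
    and "\<forall>xs. g xs \<noteq> 0 \<longrightarrow> length xs = n \<and> set xs \<subseteq> carrier \<Gamma>" and "f xs + g xs \<noteq> 0"
  moreover have "f xs \<noteq> 0 \<or> g xs \<noteq> 0" using \<open>f xs + g xs \<noteq> 0\<close> by auto
  ultimately show "length xs = n \<and> set xs \<subseteq> carrier \<Gamma>" by blast
qed

lemma subspace_bounded_cochains: "real_fun.subspace (bounded_cochains \<Gamma> n)"
  unfolding real_fun.subspace_def
proof (intro conjI ballI allI)
  show "0 \<in> bounded_cochains \<Gamma> n"
    using real_fun.subspace_0[OF subspace_cochains] by (auto simp: bounded_cochains_def)
next
  fix f g assume "f \<in> bounded_cochains \<Gamma> n" "g \<in> bounded_cochains \<Gamma> n"
  then obtain C D where "\<forall>xs. \<bar>f xs\<bar> \<le> C" "\<forall>xs. \<bar>g xs\<bar> \<le> D" and "f \<in> cochains \<Gamma> n" "g \<in> cochains \<Gamma> n"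
    by (auto simp: bounded_cochains_def)
  then have "\<forall>xs. \<bar>f xs + g xs\<bar> \<le> C + D" and "f + g \<in> cochains \<Gamma> n"
    by (auto intro: abs_triangle_ineq[THEN order_trans] add_mono real_fun.subspace_add[OF subspace_cochains])
  then show "f + g \<in> bounded_cochains \<Gamma> n" by (auto simp: bounded_cochains_def)
next
  fix c f assume "f \<in> bounded_cochains \<Gamma> n"
  then obtain C where "\<forall>xs. \<bar>f xs\<bar> \<le> C" and "f \<in> cochains \<Gamma> n" by (auto simp: bounded_cochains_def)
  then have "\<forall>xs. \<bar>c * f xs\<bar> \<le> \<bar>c\<bar> * C" and "(\<lambda>xs. c * f xs) \<in> cochains \<Gamma> n"
    by (auto simp: abs_mult intro: mult_left_mono real_fun.subspace_scale[OF subspace_cochains, simplified])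
  then show "(\<lambda>xs. c * f xs) \<in> bounded_cochains \<Gamma> n" by (auto simp: bounded_cochains_def)
qed

lemma subspace_bounded_cocycles: "real_fun.subspace (bounded_cocycles \<Gamma> n)"
proof -
  have "bounded_cocycles \<Gamma> n = bounded_cochains \<Gamma> n \<inter> coboundary \<Gamma> n -` {0}"
    by (auto simp: bounded_cocycles_def zero_fun_def)
  then show ?thesis
    by (simp add: real_fun.subspace_inter subspace_bounded_cochains
        real_fun_pair.linear_subspace_vimage[OF linear_coboundary])
qed

lemma subspace_coboundaries: "real_fun.subspace (coboundaries \<Gamma> (Suc m))"
  unfolding coboundaries_def
  using real_fun_pair.linear_subspace_image[OF linear_coboundary subspace_cochains] by simp

lemma subspace_bounded_coboundaries: "real_fun.subspace (bounded_coboundaries \<Gamma> (Suc m))"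
  unfolding bounded_coboundaries_def
  using real_fun_pair.linear_subspace_image[OF linear_coboundary subspace_bounded_cochains] by simp

lemma diff_mem_cocycles:
  assumes "c \<in> cochains \<Gamma> n" and "c' \<in> cochains \<Gamma> n" and "coboundary \<Gamma> n c = coboundary \<Gamma> n c'"
  shows "c - c' \<in> cocycles \<Gamma> n"
  using assms real_fun.subspace_diff[OF subspace_cochains]
  by (simp add: cocycles_def real_fun_pair.linear_diff[OF linear_coboundary] zero_fun_def)

lemma fin_dim_ker_comparison_if_fin_dim_Hb:
  assumes "fin_dim_Hb \<Gamma> 3" shows "fin_dim_ker_comparison \<Gamma> 3"
proof -
  have "real_fun.subspace (coboundaries \<Gamma> 3)" "real_fun.subspace (bounded_coboundaries \<Gamma> 3)"
    using subspace_coboundaries[of \<Gamma> 2] subspace_bounded_coboundaries[of \<Gamma> 2] by simp_all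
  then show ?thesis
    using assms unfolding fin_dim_ker_comparison_def fin_dim_Hb_def
    by (auto intro!: fin_dim_quot_subspace[where V = "bounded_cocycles \<Gamma> 3"]
        real_fun.subspace_inter subspace_bounded_cocycles)
qed

section \<open>Homogenization of quasimorphisms\<close>

lemma LIMSEQ_if_abs_diff_le_const_over_n:
  fixes a :: "nat \<Rightarrow> real"
  assumes "\<And>n. n \<ge> 1 \<Longrightarrow> \<bar>a n - r\<bar> \<le> C / real n"
  shows "a \<longlonglongrightarrow> r"
proof -
  have "(\<lambda>n. a n - r) \<longlonglongrightarrow> 0"
  proof (rule real_tendsto_sandwich[where f = "\<lambda>n. - C / real n" and h = "\<lambda>n. C / real n"])
    have "- C / real n \<le> a n - r \<and> a n - r \<le> C / real n" if "n \<ge> 1" for n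
      using assms[OF that] unfolding abs_le_iff by auto
    then show "\<forall>\<^sub>F n in sequentially. - C / real n \<le> a n - r"
      and "\<forall>\<^sub>F n in sequentially. a n - r \<le> C / real n"
      by (auto intro: eventually_sequentiallyI[of 1])
  qed (use lim_const_over_n[of "-C"] lim_const_over_n[of C] in simp_all)
  then show ?thesis by (rule LIM_zero_cancel)
qed

lemma (in group) subgroup_nat_pow_closed: "subgroup K G \<Longrightarrow> x \<in> K \<Longrightarrow> x [^] (n::nat) \<in> K"
  using subgroup_int_pow_closed[of K x "int n"] by (simp add: int_pow_int)

locale quasimorphism = group G for G (structure) +
  fixes f :: "'a \<Rightarrow> real" and D :: real
  assumes defect: "x \<in> carrier G \<Longrightarrow> y \<in> carrier G \<Longrightarrow> \<bar>f (x \<otimes> y) - f x - f y\<bar> \<le> D"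
begin

definition homogenization :: "'a \<Rightarrow> real" where
  "homogenization g = lim (\<lambda>n. f (g [^] n) / real n)"

lemma abs_one_le_defect: "\<bar>f \<one>\<bar> \<le> D"
  using defect[of \<one> \<one>] by simp

lemma defect_nonneg: "0 \<le> D"
  using abs_one_le_defect by linarith

lemma nat_pow_defect: "x \<in> carrier G \<Longrightarrow> \<bar>f (x [^] (k::nat)) - real k * f x\<bar> \<le> real k * D + D"
proof (induction k)
  case 0
  then show ?case using abs_one_le_defect by simp
next
  case (Suc k)
  have "\<bar>f (x [^] k \<otimes> x) - f (x [^] k) - f x\<bar> \<le> D" using defect Suc.prems by simp
  then show ?case using Suc by (simp add: algebra_simps abs_le_iff)
qed

lemma nat_pow_quotient_close:
  assumes g: "g \<in> carrier G" and "0 < n" "0 < m"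
  shows "\<bar>f (g [^] (n * m)) / real (n * m) - f (g [^] n) / real n\<bar> \<le> D / real n + D / real (n * m)"
proof -
  have "\<bar>f ((g [^] n) [^] m) - real m * f (g [^] n)\<bar> \<le> real m * D + D"
    using nat_pow_defect g by simp
  then have "\<bar>f (g [^] (n * m)) - real m * f (g [^] n)\<bar> / real (n * m) \<le> (real m * D + D) / real (n * m)"
    using g by (intro divide_right_mono) (simp_all add: nat_pow_pow)
  moreover have "f (g [^] (n * m)) / real (n * m) - f (g [^] n) / real n
      = (f (g [^] (n * m)) - real m * f (g [^] n)) / real (n * m)"
    and "(real m * D + D) / real (n * m) = D / real n + D / real (n * m)"
    using assms by (simp_all add: field_simps)
  ultimately show ?thesis by (simp add: abs_divide)
qed

lemma homogenization_LIMSEQ: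
  assumes g: "g \<in> carrier G"
  shows "(\<lambda>n. f (g [^] n) / real n) \<longlonglongrightarrow> homogenization g"
proof -
  define a where "a n = f (g [^] n) / real n" for n
  have close: "\<bar>a (n * m) - a n\<bar> \<le> 2 * D / real n" if "0 < n" "0 < m" for n m
  proof -
    have "D / real (n * m) \<le> D / real n"
      using that defect_nonneg by (intro divide_left_mono) auto
    then show ?thesis using nat_pow_quotient_close[OF g that] unfolding a_def by simp
  qed
  have "Cauchy a"
  proof (rule CauchyI)
    fix e :: real assume "0 < e"
    obtain M :: nat where M: "4 * D / e < real M" using reals_Archimedean2 by blast
    moreover have "0 \<le> 4 * D / e" using defect_nonneg \<open>0 < e\<close> by simp
    ultimately have "0 < M" by linarith
    have "\<bar>a m - a n\<bar> < e" if "M \<le> m" "M \<le> n" for m n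
    proof -
      have "2 * D / real m \<le> 2 * D / real M" "2 * D / real n \<le> 2 * D / real M"
        using that \<open>0 < M\<close> defect_nonneg by (auto intro!: divide_left_mono)
      moreover have "a (n * m) = a (m * n)" by (simp add: mult.commute)
      ultimately have "\<bar>a m - a n\<bar> \<le> 4 * D / real M"
        using close[of m n] close[of n m] that \<open>0 < M\<close> unfolding abs_le_iff by simp
      also have "\<dots> < e" using M \<open>0 < e\<close> \<open>0 < M\<close> by (simp add: field_simps)
      finally show ?thesis .
    qed
    then show "\<exists>M. \<forall>m\<ge>M. \<forall>n\<ge>M. norm (a m - a n) < e" by auto
  qed
  then have "convergent a" by (rule Cauchy_convergent)
  then show ?thesis unfolding a_def homogenization_def convergent_LIMSEQ_iff .
qed

lemma homogenization_eqI:
  assumes g: "g \<in> carrier G" and bound: "\<And>n. \<bar>f (g [^] (n::nat)) - real n * r\<bar> \<le> C"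
  shows "homogenization g = r"
proof -
  have "(\<lambda>n. f (g [^] n) / real n) \<longlonglongrightarrow> r"
  proof (rule LIMSEQ_if_abs_diff_le_const_over_n)
    fix n :: nat assume n: "n \<ge> 1"
    have "\<bar>f (g [^] n) / real n - r\<bar> = \<bar>f (g [^] n) - real n * r\<bar> / real n"
      using n by (simp add: field_simps abs_divide)
    also have "\<dots> \<le> C / real n" using bound n by (intro divide_right_mono) auto
    finally show "\<bar>f (g [^] n) / real n - r\<bar> \<le> C / real n" .
  qed
  then show ?thesis using homogenization_LIMSEQ[OF g] LIMSEQ_unique by blast
qed

lemma nat_pow_homogenization_close:
  assumes g: "g \<in> carrier G"
  shows "\<bar>f (g [^] (k::nat)) - real k * homogenization g\<bar> \<le> D"
proof (cases "k = 0")
  case True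
  then show ?thesis using abs_one_le_defect by simp
next
  case False
  have "(\<lambda>m. f (g [^] (k * m)) / real (k * m)) \<longlonglongrightarrow> homogenization g"
    using LIMSEQ_subseq_LIMSEQ[OF homogenization_LIMSEQ[OF g], of "\<lambda>m. k * m"] False
    by (simp add: strict_mono_def o_def)
  then have "(\<lambda>m. \<bar>f (g [^] (k * m)) / real (k * m) - f (g [^] k) / real k\<bar>)
      \<longlonglongrightarrow> \<bar>homogenization g - f (g [^] k) / real k\<bar>"
    by (intro tendsto_intros)
  moreover have "(\<lambda>m. D / real k + (D / real k) / real m) \<longlonglongrightarrow> D / real k + 0"
    by (intro tendsto_intros)
  moreover have "\<forall>m\<ge>1. \<bar>f (g [^] (k * m)) / real (k * m) - f (g [^] k) / real k\<bar> \<le> D / real k + (D / real k) / real m"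
    using nat_pow_quotient_close[OF g] False by simp
  ultimately have "\<bar>homogenization g - f (g [^] k) / real k\<bar> \<le> D / real k + 0"
    by (blast intro: LIMSEQ_le)
  then show ?thesis
    using False by (simp add: abs_le_iff field_simps)
qed

lemma homogenization_close: "g \<in> carrier G \<Longrightarrow> \<bar>f g - homogenization g\<bar> \<le> D"
  using nat_pow_homogenization_close[of g 1] by simp

lemma homogenization_defect:
  "x \<in> carrier G \<Longrightarrow> y \<in> carrier G \<Longrightarrow>
   \<bar>homogenization (x \<otimes> y) - homogenization x - homogenization y\<bar> \<le> 4 * D"
  using homogenization_close[of x] homogenization_close[of y] homogenization_close[of "x \<otimes> y"] defect[of x y]
  unfolding abs_le_iff by simp

lemma homogenization_nat_pow:
  assumes g: "g \<in> carrier G"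
  shows "homogenization (g [^] (m::nat)) = real m * homogenization g"
proof (rule homogenization_eqI)
  show "\<bar>f ((g [^] m) [^] n) - real n * (real m * homogenization g)\<bar> \<le> D" for n
    using nat_pow_homogenization_close[OF g, of "m * n"] g by (simp add: nat_pow_pow algebra_simps)
qed (use g in simp)

lemma homogenization_inv:
  assumes g: "g \<in> carrier G"
  shows "homogenization (inv g) = - homogenization g"
proof (rule homogenization_eqI)
  show "\<bar>f (inv g [^] n) - real n * - homogenization g\<bar> \<le> 3 * D" for n
    using defect[of "g [^] n" "inv (g [^] n)"] abs_one_le_defect nat_pow_homogenization_close[OF g, of n] g
    unfolding abs_le_iff by (simp add: nat_pow_inv)
qed (use g in simp)

lemma homogenization_int_pow:
  assumes g: "g \<in> carrier G"
  shows "homogenization (g [^] (k::int)) = of_int k * homogenization g"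
proof (cases "k < 0")
  case True
  then have "g [^] k = inv (g [^] nat (- k))" unfolding int_pow_def2 by simp
  moreover have "homogenization (inv (g [^] nat (- k))) = - (real (nat (- k)) * homogenization g)"
    using homogenization_inv[of "g [^] nat (- k)"] homogenization_nat_pow[OF g] g by simp
  ultimately show ?thesis using True by simp
next
  case False
  then have "g [^] k = g [^] nat k" unfolding int_pow_def2 by simp
  then show ?thesis using homogenization_nat_pow[OF g, of "nat k"] False by simp
qed

lemma conj_nat_pow:
  assumes "h \<in> carrier G" and "x \<in> carrier G"
  shows "(h \<otimes> x \<otimes> inv h) [^] (n::nat) = h \<otimes> x [^] n \<otimes> inv h"
proof (induction n)
  case (Suc n)
  have "inv h \<otimes> (h \<otimes> z) = z" if "z \<in> carrier G" for z
    using assms that by (simp add: m_assoc[symmetric])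
  then show ?case using Suc assms by (simp add: m_assoc)
qed (use assms in simp)

lemma homogenization_conj:
  assumes h: "h \<in> carrier G" and x: "x \<in> carrier G"
  shows "homogenization (h \<otimes> x \<otimes> inv h) = homogenization x"
proof (rule homogenization_eqI)
  fix n :: nat
  have "h \<otimes> x [^] n \<otimes> inv h = h \<otimes> (x [^] n \<otimes> inv h)" using h x by (simp add: m_assoc)
  then show "\<bar>f ((h \<otimes> x \<otimes> inv h) [^] n) - real n * homogenization x\<bar> \<le> 3 * D + \<bar>f h\<bar> + \<bar>f (inv h)\<bar>"
    using defect[of h "x [^] n \<otimes> inv h"] defect[of "x [^] n" "inv h"] nat_pow_homogenization_close[OF x, of n] h x
      abs_ge_self[of "f h"] abs_ge_minus_self[of "f h"] abs_ge_self[of "f (inv h)"] abs_ge_minus_self[of "f (inv h)"]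
    unfolding conj_nat_pow[OF h x] abs_le_iff by simp
qed (use h x in simp)

lemma restricted_homogenization_mem:
  assumes K: "K \<lhd> G"
  shows "(\<lambda>x. if x \<in> K then homogenization x else 0) \<in> inv_hom_quasimorphisms G K"
proof -
  have sub: "subgroup K G" using K normal_imp_subgroup by blast
  then have KG: "K \<subseteq> carrier G" by (rule subgroup.subset)
  have "\<bar>homogenization (x \<otimes> y) - homogenization x - homogenization y\<bar> \<le> 4 * D" if "x \<in> K" "y \<in> K" for x y
    using homogenization_defect that KG by blast
  moreover have "homogenization (x [^] k) = of_int k * homogenization x" if "x \<in> K" for x and k :: int
    using homogenization_int_pow that KG by blast
  moreover have "homogenization (g \<otimes> x \<otimes> inv g) = homogenization x" if "g \<in> carrier G" "x \<in> K" for g x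
    using homogenization_conj that KG by blast
  ultimately show ?thesis
    unfolding inv_hom_quasimorphisms_def
    using subgroup.m_closed[OF sub] subgroup_int_pow_closed[OF sub] normal.inv_op_closed2[OF K]
    by (intro CollectI conjI exI[of _ "4 * D"]) auto
qed

lemma homogenization_eq_on_subgroup:
  assumes K: "subgroup K G" and x: "x \<in> K"
    and hom: "\<And>y n. y \<in> K \<Longrightarrow> h (y [^] (n::nat)) = real n * h y"
    and close: "\<And>y. y \<in> K \<Longrightarrow> \<bar>f y - h y\<bar> \<le> C"
  shows "homogenization x = h x"
proof (rule homogenization_eqI)
  show "x \<in> carrier G" using subgroup.subset[OF K] x by blast
  show "\<bar>f (x [^] n) - real n * h x\<bar> \<le> C" for n
    using close[OF subgroup_nat_pow_closed[OF K x]] hom[OF x] by simp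
qed

end

lemma (in group) inv_homs_nat_pow:
  assumes K: "subgroup K G" and p: "p \<in> inv_homs G K" and x: "x \<in> K"
  shows "p (x [^] (n::nat)) = real n * p x"
proof (induction n)
  case 0
  have "p (\<one> \<otimes> \<one>) = p \<one> + p \<one>" using p subgroup.one_closed[OF K] unfolding inv_homs_def by blast
  then show ?case by simp
next
  case (Suc n)
  have "p (x [^] n \<otimes> x) = p (x [^] n) + p x"
    using p x subgroup_nat_pow_closed[OF K x] unfolding inv_homs_def by blast
  then show ?case using Suc by (simp add: algebra_simps)
qed

lemma inv_hom_quasimorphisms_nat_pow:
  "\<phi> \<in> inv_hom_quasimorphisms G K \<Longrightarrow> x \<in> K \<Longrightarrow> \<phi> (x [^]\<^bsub>G\<^esub> (n::nat)) = real n * \<phi> x"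
  unfolding inv_hom_quasimorphisms_def by (metis (mono_tags, lifting) mem_Collect_eq int_pow_int of_int_of_nat_eq)

lemma subspace_inv_homs: "real_fun.subspace (inv_homs G H)"
  unfolding real_fun.subspace_def inv_homs_def by (auto simp: algebra_simps)

lemma subspace_inv_hom_quasimorphisms: "real_fun.subspace (inv_hom_quasimorphisms G H)"
  unfolding real_fun.subspace_def
proof (intro conjI ballI allI)
  show "0 \<in> inv_hom_quasimorphisms G H" unfolding inv_hom_quasimorphisms_def by auto
next
  fix f g assume f: "f \<in> inv_hom_quasimorphisms G H" and g: "g \<in> inv_hom_quasimorphisms G H"
  then obtain C D where C: "\<forall>x\<in>H. \<forall>y\<in>H. \<bar>f (x \<otimes>\<^bsub>G\<^esub> y) - f x - f y\<bar> \<le> C"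
    and D: "\<forall>x\<in>H. \<forall>y\<in>H. \<bar>g (x \<otimes>\<^bsub>G\<^esub> y) - g x - g y\<bar> \<le> D"
    unfolding inv_hom_quasimorphisms_def by blast
  have "\<bar>(f + g) (x \<otimes>\<^bsub>G\<^esub> y) - (f + g) x - (f + g) y\<bar> \<le> C + D" if "x \<in> H" "y \<in> H" for x y
    using C[rule_format, OF that] D[rule_format, OF that] by (simp add: abs_le_iff; linarith)
  then show "f + g \<in> inv_hom_quasimorphisms G H"
    using f g unfolding inv_hom_quasimorphisms_def by (auto simp: algebra_simps)
next
  fix c f assume f: "f \<in> inv_hom_quasimorphisms G H"
  then obtain C where C: "\<forall>x\<in>H. \<forall>y\<in>H. \<bar>f (x \<otimes>\<^bsub>G\<^esub> y) - f x - f y\<bar> \<le> C"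
    unfolding inv_hom_quasimorphisms_def by blast
  have "\<bar>c * f (x \<otimes>\<^bsub>G\<^esub> y) - c * f x - c * f y\<bar> \<le> \<bar>c\<bar> * C" if "x \<in> H" "y \<in> H" for x y
    using mult_left_mono[OF C[rule_format, OF that] abs_ge_zero[of c]]
    by (simp add: abs_mult[symmetric] algebra_simps)
  then show "(\<lambda>x. c * f x) \<in> inv_hom_quasimorphisms G H"
    using f unfolding inv_hom_quasimorphisms_def by auto
qed

section \<open>Lifting quasimorphisms on a normal subgroup\<close>

definition coset_rep :: "'a set \<Rightarrow> 'a" where
  "coset_rep A = (SOME g. g \<in> A)"

definition section_extension :: "('a, 'b) monoid_scheme \<Rightarrow> 'a set \<Rightarrow> ('a \<Rightarrow> real) \<Rightarrow> 'a \<Rightarrow> real" where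
  "section_extension G H \<phi> g = \<phi> (g \<otimes>\<^bsub>G\<^esub> inv\<^bsub>G\<^esub> coset_rep (H #>\<^bsub>G\<^esub> g))"

text \<open>The coboundary of \<open>section_extension G H \<phi>\<close>, read off on coset representatives.\<close>

definition section_cochain :: "('a, 'b) monoid_scheme \<Rightarrow> 'a set \<Rightarrow> ('a \<Rightarrow> real) \<Rightarrow> 'a set list \<Rightarrow> real" where
  "section_cochain G H \<phi> xs = (if length xs = 2 \<and> set xs \<subseteq> carrier (G Mod H) then
      let \<psi> = section_extension G H \<phi>; a = coset_rep (xs ! 0); b = coset_rep (xs ! 1)
      in \<psi> a - \<psi> (a \<otimes>\<^bsub>G\<^esub> b) + \<psi> b
    else 0)"

lemma section_cochain_lin:
  "section_cochain G H (\<lambda>x. a * \<phi> x + b * \<phi>' x)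
     = (\<lambda>xs. a * section_cochain G H \<phi> xs + b * section_cochain G H \<phi>' xs)"
  by (simp add: fun_eq_iff section_cochain_def section_extension_def Let_def algebra_simps)

lemma linear_section_cochain:
  "Vector_Spaces.linear (\<lambda>r f x. r * f x) (\<lambda>r f x. r * f x) (section_cochain G H)"
  unfolding Vector_Spaces.linear_iff
  using vector_space_real_fun[where 'x = 'a] vector_space_real_fun[where 'x = "'a set list"]
    section_cochain_lin[of G H 1 _ 1] section_cochain_lin[of G H _ _ 0]
  by (simp add: plus_fun_def)

lemma linear_coboundary_section_cochain:
  "Vector_Spaces.linear (\<lambda>r f x. r * f x) (\<lambda>r f x. r * f x)
     (coboundary (G Mod H) 2 \<circ> section_cochain G H)"
  by (rule Vector_Spaces.linear_compose[OF linear_section_cochain linear_coboundary])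

lemma section_cochain_cochains: "section_cochain G H \<phi> \<in> cochains (G Mod H) 2"
  unfolding cochains_def section_cochain_def by auto

lemma section_cochain_eval:
  "A \<in> carrier (G Mod H) \<Longrightarrow> B \<in> carrier (G Mod H) \<Longrightarrow>
   section_cochain G H \<phi> [A, B] = section_extension G H \<phi> (coset_rep A)
     - section_extension G H \<phi> (coset_rep A \<otimes>\<^bsub>G\<^esub> coset_rep B) + section_extension G H \<phi> (coset_rep B)"
  by (simp add: section_cochain_def Let_def)

lemma transgression_cocyclesI:
  assumes "c \<in> cochains (G Mod H) 2" and "\<phi> \<in> inv_homs G H"
    and "\<And>n g. n \<in> H \<Longrightarrow> g \<in> carrier G \<Longrightarrow> \<psi> (n \<otimes>\<^bsub>G\<^esub> g) = \<phi> n + \<psi> g"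
    and "\<And>g h. g \<in> carrier G \<Longrightarrow> h \<in> carrier G \<Longrightarrow>
           c [H #>\<^bsub>G\<^esub> g, H #>\<^bsub>G\<^esub> h] = \<psi> h - \<psi> (g \<otimes>\<^bsub>G\<^esub> h) + \<psi> g"
  shows "c \<in> transgression_cocycles G H"
  using assms unfolding transgression_cocycles_def by blast

lemma subspace_transgression_cocycles: "real_fun.subspace (transgression_cocycles G H)"
  unfolding real_fun.subspace_def
proof (intro conjI ballI allI)
  show "0 \<in> transgression_cocycles G H"
    using real_fun.subspace_0[OF subspace_cochains] real_fun.subspace_0[OF subspace_inv_homs]
    by (intro transgression_cocyclesI[where \<phi> = 0 and \<psi> = 0]) auto
next
  fix c d assume "c \<in> transgression_cocycles G H" "d \<in> transgression_cocycles G H"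
  then obtain \<phi> \<psi> \<phi>' \<psi>' where "c \<in> cochains (G Mod H) 2" "\<phi> \<in> inv_homs G H"
    "\<forall>n\<in>H. \<forall>g\<in>carrier G. \<psi> (n \<otimes>\<^bsub>G\<^esub> g) = \<phi> n + \<psi> g"
    "\<forall>g\<in>carrier G. \<forall>h\<in>carrier G. c [H #>\<^bsub>G\<^esub> g, H #>\<^bsub>G\<^esub> h] = \<psi> h - \<psi> (g \<otimes>\<^bsub>G\<^esub> h) + \<psi> g"
    "d \<in> cochains (G Mod H) 2" "\<phi>' \<in> inv_homs G H"
    "\<forall>n\<in>H. \<forall>g\<in>carrier G. \<psi>' (n \<otimes>\<^bsub>G\<^esub> g) = \<phi>' n + \<psi>' g"
    "\<forall>g\<in>carrier G. \<forall>h\<in>carrier G. d [H #>\<^bsub>G\<^esub> g, H #>\<^bsub>G\<^esub> h] = \<psi>' h - \<psi>' (g \<otimes>\<^bsub>G\<^esub> h) + \<psi>' g"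
    unfolding transgression_cocycles_def by blast
  then show "c + d \<in> transgression_cocycles G H"
    by (intro transgression_cocyclesI[where \<phi> = "\<phi> + \<phi>'" and \<psi> = "\<psi> + \<psi>'"]
        real_fun.subspace_add[OF subspace_cochains] real_fun.subspace_add[OF subspace_inv_homs])
      auto
next
  fix a c assume "c \<in> transgression_cocycles G H"
  then obtain \<phi> \<psi> where "c \<in> cochains (G Mod H) 2" "\<phi> \<in> inv_homs G H"
    "\<forall>n\<in>H. \<forall>g\<in>carrier G. \<psi> (n \<otimes>\<^bsub>G\<^esub> g) = \<phi> n + \<psi> g"
    "\<forall>g\<in>carrier G. \<forall>h\<in>carrier G. c [H #>\<^bsub>G\<^esub> g, H #>\<^bsub>G\<^esub> h] = \<psi> h - \<psi> (g \<otimes>\<^bsub>G\<^esub> h) + \<psi> g"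
    unfolding transgression_cocycles_def by blast
  then show "(\<lambda>x. a * c x) \<in> transgression_cocycles G H"
    by (intro transgression_cocyclesI[where \<phi> = "\<lambda>x. a * \<phi> x" and \<psi> = "\<lambda>x. a * \<psi> x"]
        real_fun.subspace_scale[OF subspace_cochains, simplified]
        real_fun.subspace_scale[OF subspace_inv_homs, simplified])
      (auto simp: ring_distribs)
qed

lemma d2_image_reps_eq:
  "d2_image_reps G H = {c + b | c b. c \<in> transgression_cocycles G H \<and> b \<in> coboundaries (G Mod H) 2}"
  by (simp add: d2_image_reps_def plus_fun_def)

lemma subspace_d2_image_reps: "real_fun.subspace (d2_image_reps G H)"
  unfolding d2_image_reps_eq
  using subspace_coboundaries[of "G Mod H" 1]
  by (simp add: numeral_2_eq_2 real_fun.subspace_sums subspace_transgression_cocycles)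

lemma fin_dim_H2_mod_d2_if_fin_dim_H:
  assumes "fin_dim_H (G Mod H) 2" shows "fin_dim_H2_mod_d2 G H"
proof -
  have "coboundaries (G Mod H) 2 \<subseteq> d2_image_reps G H"
    unfolding d2_image_reps_eq
    using real_fun.subspace_0[OF subspace_transgression_cocycles] by force
  then show ?thesis
    using fin_dim_quot_mono assms unfolding fin_dim_H_def fin_dim_H2_mod_d2_def by blast
qed

context normal
begin

lemma coset_rep_mem:
  assumes "A \<in> carrier (G Mod H)"
  shows "coset_rep A \<in> carrier G" and "H #> coset_rep A = A"
proof -
  obtain a where a: "a \<in> carrier G" "A = H #> a"
    using assms unfolding FactGroup_def RCOSETS_def by auto
  then have "a \<in> A" using rcos_self[OF a(1) subgroup_axioms] by simp
  then have rep: "coset_rep A \<in> A" unfolding coset_rep_def by (rule someI)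
  then show "coset_rep A \<in> carrier G" using a elemrcos_carrier[OF is_group a(1)] by simp
  show "H #> coset_rep A = A" using repr_independence[of "coset_rep A" H a] rep a subgroup_axioms by simp
qed

lemma r_coset_in_carrier_Mod: "g \<in> carrier G \<Longrightarrow> H #> g \<in> carrier (G Mod H)"
  unfolding FactGroup_def by (simp add: rcosetsI[OF subset])

lemma mult_inv_coset_rep_mem: "g \<in> carrier G \<Longrightarrow> g \<otimes> inv coset_rep (H #> g) \<in> H"
proof -
  assume g: "g \<in> carrier G"
  note A = r_coset_in_carrier_Mod[OF g]
  have "g \<in> H #> coset_rep (H #> g)" using coset_rep_mem(2)[OF A] rcos_self[OF g subgroup_axioms] by simp
  then show ?thesis using rcos_module_imp[OF is_group coset_rep_mem(1)[OF A]] by simp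
qed

lemma r_coset_mult_left: "n \<in> H \<Longrightarrow> g \<in> carrier G \<Longrightarrow> H #> (n \<otimes> g) = H #> g"
  using repr_independence[of "n \<otimes> g" H g] rcosI[of n H g] subset subgroup_axioms by simp

lemma section_extension_approx:
  assumes defect: "\<And>x y. x \<in> H \<Longrightarrow> y \<in> H \<Longrightarrow> \<bar>\<phi> (x \<otimes> y) - \<phi> x - \<phi> y\<bar> \<le> D"
    and n: "n \<in> H" and g: "g \<in> carrier G"
  shows "\<bar>section_extension G H \<phi> (n \<otimes> g) - \<phi> n - section_extension G H \<phi> g\<bar> \<le> D"
proof -
  define s where "s = coset_rep (H #> g)"
  have s: "s \<in> carrier G" unfolding s_def using coset_rep_mem(1)[OF r_coset_in_carrier_Mod[OF g]] .
  have gs: "g \<otimes> inv s \<in> H" unfolding s_def using mult_inv_coset_rep_mem[OF g] .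
  have "section_extension G H \<phi> (n \<otimes> g) = \<phi> (n \<otimes> (g \<otimes> inv s))"
    unfolding section_extension_def r_coset_mult_left[OF n g] s_def[symmetric] using n g s
    by (simp add: m_assoc)
  moreover have "section_extension G H \<phi> g = \<phi> (g \<otimes> inv s)"
    unfolding section_extension_def s_def ..
  ultimately show ?thesis using defect[OF n gs] by simp
qed

text \<open>Write \<open>g = n s\<close> and \<open>h = m t\<close> with \<open>s, t\<close> the coset representatives; then
  \<open>g h = n (s m s\<inverse>) s t\<close>, and conjugation invariance of \<open>\<phi>\<close> lets the \<open>\<phi>\<close>-terms cancel.\<close>

lemma section_cochain_approx:
  assumes defect: "\<And>x y. x \<in> H \<Longrightarrow> y \<in> H \<Longrightarrow> \<bar>\<phi> (x \<otimes> y) - \<phi> x - \<phi> y\<bar> \<le> D"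
    and conj: "\<And>g x. g \<in> carrier G \<Longrightarrow> x \<in> H \<Longrightarrow> \<phi> (g \<otimes> x \<otimes> inv g) = \<phi> x"
    and g: "g \<in> carrier G" and h: "h \<in> carrier G"
  shows "\<bar>section_extension G H \<phi> g - section_extension G H \<phi> (g \<otimes> h) + section_extension G H \<phi> h
           - section_cochain G H \<phi> [H #> g, H #> h]\<bar> \<le> 4 * D"
proof -
  let ?\<psi> = "section_extension G H \<phi>"
  define s where "s = coset_rep (H #> g)"
  define t where "t = coset_rep (H #> h)"
  have s: "s \<in> carrier G" and t: "t \<in> carrier G"
    unfolding s_def t_def using coset_rep_mem(1) r_coset_in_carrier_Mod g h by auto
  define n where "n = g \<otimes> inv s"
  define m where "m = h \<otimes> inv t"
  have n: "n \<in> H" and m: "m \<in> H"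
    unfolding n_def m_def s_def t_def using mult_inv_coset_rep_mem g h by auto
  define m' where "m' = s \<otimes> m \<otimes> inv s"
  have m': "m' \<in> H" unfolding m'_def using inv_op_closed2[OF s m] .
  have cancel: "inv x \<otimes> (x \<otimes> y) = y" if "x \<in> carrier G" "y \<in> carrier G" for x y
    using that by (simp add: m_assoc[symmetric])
  have "g = n \<otimes> s" "h = m \<otimes> t" "g \<otimes> h = n \<otimes> (m' \<otimes> (s \<otimes> t))"
    unfolding n_def m_def m'_def using g h s t by (simp_all add: m_assoc cancel)
  then have "\<bar>?\<psi> g - \<phi> n - ?\<psi> s\<bar> \<le> D" "\<bar>?\<psi> h - \<phi> m - ?\<psi> t\<bar> \<le> D"
    "\<bar>?\<psi> (g \<otimes> h) - \<phi> n - ?\<psi> (m' \<otimes> (s \<otimes> t))\<bar> \<le> D"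
    "\<bar>?\<psi> (m' \<otimes> (s \<otimes> t)) - \<phi> m' - ?\<psi> (s \<otimes> t)\<bar> \<le> D"
    using section_extension_approx[OF defect] n m m' s t by (auto simp del: section_extension_def)
  moreover have "section_cochain G H \<phi> [H #> g, H #> h] = ?\<psi> s - ?\<psi> (s \<otimes> t) + ?\<psi> t"
    unfolding s_def t_def using section_cochain_eval r_coset_in_carrier_Mod g h by blast
  moreover have "\<phi> m' = \<phi> m" unfolding m'_def using conj s m by blast
  ultimately show ?thesis unfolding abs_le_iff by linarith
qed

lemma coboundary_section_cochain_bounded:
  assumes defect: "\<And>x y. x \<in> H \<Longrightarrow> y \<in> H \<Longrightarrow> \<bar>\<phi> (x \<otimes> y) - \<phi> x - \<phi> y\<bar> \<le> D"
    and conj: "\<And>g x. g \<in> carrier G \<Longrightarrow> x \<in> H \<Longrightarrow> \<phi> (g \<otimes> x \<otimes> inv g) = \<phi> x"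
  shows "\<bar>coboundary (G Mod H) 2 (section_cochain G H \<phi>) xs\<bar> \<le> 16 * D"
proof (cases "length xs = 3 \<and> set xs \<subseteq> carrier (G Mod H)")
  case False
  have "0 \<le> D" using defect[of \<one> \<one>] by simp
  moreover have "coboundary (G Mod H) 2 (section_cochain G H \<phi>) xs = 0"
    using False by (auto simp: coboundary_def)
  ultimately show ?thesis by simp
next
  case True
  have approx: "\<bar>section_extension G H \<phi> g - section_extension G H \<phi> (g \<otimes> h)
      + section_extension G H \<phi> h - section_cochain G H \<phi> [H #> g, H #> h]\<bar> \<le> 4 * D"
    if "g \<in> carrier G" "h \<in> carrier G" for g h
    by (rule section_cochain_approx[OF defect conj that])
  from True obtain A B C where xs: "xs = [A, B, C]" and ABC: "A \<in> carrier (G Mod H)" "B \<in> carrier (G Mod H)" "C \<in> carrier (G Mod H)"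
    by (auto simp: numeral_eq_Suc length_Suc_conv)
  define a b c where "a = coset_rep A" and "b = coset_rep B" and "c = coset_rep C"
  have abc: "a \<in> carrier G" "b \<in> carrier G" "c \<in> carrier G"
    unfolding a_def b_def c_def using coset_rep_mem(1) ABC by auto
  have "A = H #> a" "B = H #> b" "C = H #> c"
    unfolding a_def b_def c_def using coset_rep_mem(2) ABC by auto
  then have "coboundary (G Mod H) 2 (section_cochain G H \<phi>) xs =
     section_cochain G H \<phi> [H #> b, H #> c] - section_cochain G H \<phi> [H #> (a \<otimes> b), H #> c]
     + section_cochain G H \<phi> [H #> a, H #> (b \<otimes> c)] - section_cochain G H \<phi> [H #> a, H #> b]"
    unfolding xs using ABC abc by (simp add: coboundary_2_eval rcos_sum)
  then show ?thesis
    using approx[OF abc(2,3)] approx[of "a \<otimes> b" c] approx[of a "b \<otimes> c"] approx[OF abc(1,2)] abc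
    unfolding abs_le_iff by (simp add: m_assoc)
qed

lemma coboundary_section_cochain_mem:
  assumes "\<phi> \<in> inv_hom_quasimorphisms G H"
  shows "coboundary (G Mod H) 2 (section_cochain G H \<phi>)
           \<in> bounded_cocycles (G Mod H) 3 \<inter> coboundaries (G Mod H) 3"
proof -
  obtain D where "\<And>x y. x \<in> H \<Longrightarrow> y \<in> H \<Longrightarrow> \<bar>\<phi> (x \<otimes> y) - \<phi> x - \<phi> y\<bar> \<le> D"
    using assms unfolding inv_hom_quasimorphisms_def by blast
  moreover have "\<And>g x. g \<in> carrier G \<Longrightarrow> x \<in> H \<Longrightarrow> \<phi> (g \<otimes> x \<otimes> inv g) = \<phi> x"
    using assms unfolding inv_hom_quasimorphisms_def by blast
  ultimately have "\<forall>xs. \<bar>coboundary (G Mod H) 2 (section_cochain G H \<phi>) xs\<bar> \<le> 16 * D"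
    using coboundary_section_cochain_bounded by blast
  moreover have "coboundary (G Mod H) 3 (coboundary (G Mod H) 2 (section_cochain G H \<phi>)) = (\<lambda>_. 0)"
    by (rule monoid.coboundary_coboundary_2[OF group.is_monoid[OF factorgroup_is_group]])
  ultimately show ?thesis
    using coboundary_cochains[of "G Mod H" 2] section_cochain_cochains
    by (auto simp: bounded_cocycles_def bounded_cochains_def coboundaries_def numeral_3_eq_3
        numeral_2_eq_2 intro!: imageI)
qed

lemma subspace_bounded_obstruction:
  "real_fun.subspace {\<phi> \<in> inv_hom_quasimorphisms G H.
     coboundary (G Mod H) 2 (section_cochain G H \<phi>) \<in> bounded_coboundaries (G Mod H) 3}"
  using real_fun_pair.linear_subspace_vimage[OF linear_coboundary_section_cochain[of G H]
      subspace_bounded_coboundaries[of "G Mod H" 2]]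
  by (simp add: vimage_def Collect_conj_eq real_fun.subspace_inter subspace_inv_hom_quasimorphisms)

lemma fin_dim_quot_bounded_obstruction:
  assumes "fin_dim_ker_comparison (G Mod H) 3"
  shows "fin_dim_quot (inv_hom_quasimorphisms G H)
           {\<phi> \<in> inv_hom_quasimorphisms G H.
              coboundary (G Mod H) 2 (section_cochain G H \<phi>) \<in> bounded_coboundaries (G Mod H) 3}"
proof -
  have B: "real_fun.subspace (bounded_coboundaries (G Mod H) 3)"
    using subspace_bounded_coboundaries[of "G Mod H" 2] by simp
  have "linear_modulo (inv_hom_quasimorphisms G H) (bounded_coboundaries (G Mod H) 3)
      (\<lambda>\<phi>. coboundary (G Mod H) 2 (section_cochain G H \<phi>))"
    using linear_imp_linear_modulo[OF linear_coboundary_section_cochain[of G H] B] by (simp add: comp_def)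
  then show ?thesis
    using assms coboundary_section_cochain_mem unfolding fin_dim_ker_comparison_def
    by (intro fin_dim_quot_preimage subspace_inv_hom_quasimorphisms B) auto
qed

lemma fin_dim_quot_transgression_mod_bounded:
  assumes "fin_dim_H2_mod_d2 G H"
  shows "fin_dim_quot
           {\<phi> \<in> inv_hom_quasimorphisms G H.
              coboundary (G Mod H) 2 (section_cochain G H \<phi>) \<in> bounded_coboundaries (G Mod H) 3}
           {\<phi> \<in> inv_hom_quasimorphisms G H. section_cochain G H \<phi>
              \<in> {d + \<beta> | d \<beta>. d \<in> d2_image_reps G H \<and> \<beta> \<in> bounded_cochains (G Mod H) 2}}"
    (is "fin_dim_quot ?K1 {\<phi> \<in> _. section_cochain G H \<phi> \<in> ?B}")
proof -
  let ?\<delta> = "coboundary (G Mod H) 2"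
  have B: "real_fun.subspace ?B"
    by (intro real_fun.subspace_sums subspace_d2_image_reps subspace_bounded_cochains)
  have sub1: "d2_image_reps G H \<subseteq> ?B"
  proof
    fix d assume "d \<in> d2_image_reps G H"
    then have "d + 0 \<in> ?B" using real_fun.subspace_0[OF subspace_bounded_cochains] by blast
    then show "d \<in> ?B" by simp
  qed
  have sub2: "bounded_cochains (G Mod H) 2 \<subseteq> ?B"
  proof
    fix \<beta> assume "\<beta> \<in> bounded_cochains (G Mod H) 2"
    then have "0 + \<beta> \<in> ?B" using real_fun.subspace_0[OF subspace_d2_image_reps] by blast
    then show "\<beta> \<in> ?B" by simp
  qed
  have "\<forall>\<phi>\<in>?K1. \<exists>\<beta>. \<beta> \<in> bounded_cochains (G Mod H) 2 \<and> ?\<delta> \<beta> = ?\<delta> (section_cochain G H \<phi>)"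
    by (auto simp: bounded_coboundaries_def numeral_3_eq_3 numeral_2_eq_2 image_iff)
  then obtain \<beta> where \<beta>: "\<And>\<phi>. \<phi> \<in> ?K1 \<Longrightarrow> \<beta> \<phi> \<in> bounded_cochains (G Mod H) 2"
    "\<And>\<phi>. \<phi> \<in> ?K1 \<Longrightarrow> ?\<delta> (\<beta> \<phi>) = ?\<delta> (section_cochain G H \<phi>)"
    using bchoice[of ?K1 "\<lambda>\<phi> \<beta>. \<beta> \<in> bounded_cochains (G Mod H) 2 \<and> ?\<delta> \<beta> = ?\<delta> (section_cochain G H \<phi>)"]
    by blast
  have "linear_modulo ?K1 (bounded_cochains (G Mod H) 2 \<inter> ?\<delta> -` {0}) (\<lambda>\<phi>. section_cochain G H \<phi> - \<beta> \<phi>)"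
    by (rule linear_modulo_diff_primitive[OF linear_section_cochain linear_coboundary
          subspace_bounded_obstruction subspace_bounded_cochains]) (use \<beta> in auto)
  then have "linear_modulo ?K1 ?B (\<lambda>\<phi>. section_cochain G H \<phi> - \<beta> \<phi>)"
    by (rule linear_modulo_mono) (use sub2 in blast)
  moreover have "section_cochain G H \<phi> - \<beta> \<phi> \<in> cocycles (G Mod H) 2" if "\<phi> \<in> ?K1" for \<phi>
    using \<beta>[OF that] section_cochain_cochains by (intro diff_mem_cocycles) (auto simp: bounded_cochains_def)
  moreover have "fin_dim_quot (cocycles (G Mod H) 2) ?B"
    using assms fin_dim_quot_mono sub1 unfolding fin_dim_H2_mod_d2_def by blast
  ultimately have "fin_dim_quot ?K1 {\<phi> \<in> ?K1. section_cochain G H \<phi> - \<beta> \<phi> \<in> ?B}"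
    using subspace_bounded_obstruction B by (intro fin_dim_quot_preimage) auto
  moreover have "{\<phi> \<in> ?K1. section_cochain G H \<phi> - \<beta> \<phi> \<in> ?B}
      \<subseteq> {\<phi> \<in> inv_hom_quasimorphisms G H. section_cochain G H \<phi> \<in> ?B}"
  proof
    fix \<phi> assume "\<phi> \<in> {\<phi> \<in> ?K1. section_cochain G H \<phi> - \<beta> \<phi> \<in> ?B}"
    then have \<phi>: "\<phi> \<in> ?K1" "section_cochain G H \<phi> - \<beta> \<phi> \<in> ?B" by auto
    have "section_cochain G H \<phi> - \<beta> \<phi> + \<beta> \<phi> \<in> ?B"
      using real_fun.subspace_add[OF B \<phi>(2)] sub2 \<beta>(1)[OF \<phi>(1)] by blast
    then show "\<phi> \<in> {\<phi> \<in> inv_hom_quasimorphisms G H. section_cochain G H \<phi> \<in> ?B}"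
      using \<phi>(1) by simp
  qed
  ultimately show ?thesis by (rule fin_dim_quot_mono)
qed

lemma quasimorphism_corrected_section_extension:
  assumes defect: "\<And>x y. x \<in> H \<Longrightarrow> y \<in> H \<Longrightarrow> \<bar>\<phi> (x \<otimes> y) - \<phi> x - \<phi> y\<bar> \<le> D"
    and conj: "\<And>g x. g \<in> carrier G \<Longrightarrow> x \<in> H \<Longrightarrow> \<phi> (g \<otimes> x \<otimes> inv g) = \<phi> x"
    and c: "\<And>g h. g \<in> carrier G \<Longrightarrow> h \<in> carrier G \<Longrightarrow> c [H #> g, H #> h] = \<psi> h - \<psi> (g \<otimes> h) + \<psi> g"
    and \<beta>: "\<And>xs. \<bar>\<beta> xs\<bar> \<le> C"
    and eq: "section_cochain G H \<phi> = c + coboundary (G Mod H) 1 \<alpha> + \<beta>"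
  shows "quasimorphism G (\<lambda>g. section_extension G H \<phi> g - \<psi> g - \<alpha> [H #> g]) (4 * D + C)"
proof unfold_locales
  fix x y assume x: "x \<in> carrier G" and y: "y \<in> carrier G"
  have "coboundary (G Mod H) 1 \<alpha> [H #> x, H #> y] = \<alpha> [H #> y] - \<alpha> [H #> (x \<otimes> y)] + \<alpha> [H #> x]"
    using coboundary_1_eval[OF r_coset_in_carrier_Mod[OF x] r_coset_in_carrier_Mod[OF y]] x y
    by (simp add: rcos_sum)
  then show "\<bar>section_extension G H \<phi> (x \<otimes> y) - \<psi> (x \<otimes> y) - \<alpha> [H #> (x \<otimes> y)]
      - (section_extension G H \<phi> x - \<psi> x - \<alpha> [H #> x])
      - (section_extension G H \<phi> y - \<psi> y - \<alpha> [H #> y])\<bar> \<le> 4 * D + C"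
    using section_cochain_approx[OF defect conj x y] c[OF x y] \<beta>[of "[H #> x, H #> y]"]
    unfolding eq abs_le_iff by simp
qed

lemma inv_hom_quasimorphism_decomposition:
  assumes \<phi>: "\<phi> \<in> inv_hom_quasimorphisms G H" and L: "L \<lhd> G" "H \<subseteq> L"
    and d: "d \<in> d2_image_reps G H" and \<beta>: "\<beta> \<in> bounded_cochains (G Mod H) 2"
    and eq: "section_cochain G H \<phi> = d + \<beta>"
  shows "\<exists>a b. a \<in> inv_homs G H \<and> b \<in> inv_hom_quasimorphisms G L
           \<and> \<phi> = (\<lambda>x. a x + (if x \<in> H then b x else 0))"
proof -
  obtain D where defect: "\<And>x y. x \<in> H \<Longrightarrow> y \<in> H \<Longrightarrow> \<bar>\<phi> (x \<otimes> y) - \<phi> x - \<phi> y\<bar> \<le> D"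
    using \<phi> unfolding inv_hom_quasimorphisms_def by blast
  have conj: "\<And>g x. g \<in> carrier G \<Longrightarrow> x \<in> H \<Longrightarrow> \<phi> (g \<otimes> x \<otimes> inv g) = \<phi> x"
    using \<phi> unfolding inv_hom_quasimorphisms_def by blast
  obtain c \<alpha> where c: "c \<in> transgression_cocycles G H" and d_eq: "d = c + coboundary (G Mod H) 1 \<alpha>"
    using d unfolding d2_image_reps_eq coboundaries_def numeral_2_eq_2 by auto
  obtain \<phi>' \<psi>' where \<phi>': "\<phi>' \<in> inv_homs G H"
    and \<psi>': "\<And>n g. n \<in> H \<Longrightarrow> g \<in> carrier G \<Longrightarrow> \<psi>' (n \<otimes> g) = \<phi>' n + \<psi>' g"
    and c_eq: "\<And>g h. g \<in> carrier G \<Longrightarrow> h \<in> carrier G \<Longrightarrow> c [H #> g, H #> h] = \<psi>' h - \<psi>' (g \<otimes> h) + \<psi>' g"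
    using c unfolding transgression_cocycles_def by blast
  obtain C where C: "\<And>xs. \<bar>\<beta> xs\<bar> \<le> C"
    using \<beta> unfolding bounded_cochains_def by auto
  define F where "F g = section_extension G H \<phi> g - \<psi>' g - \<alpha> [H #> g]" for g
  interpret F: quasimorphism G F "4 * D + C"
    unfolding F_def
  proof (rule quasimorphism_corrected_section_extension)
    show "section_cochain G H \<phi> = c + coboundary (G Mod H) 1 \<alpha> + \<beta>" using eq d_eq by simp
  qed (use defect conj c_eq C in auto)
  define b where "b x = (if x \<in> L then F.homogenization x else 0)" for x
  have b: "b \<in> inv_hom_quasimorphisms G L"
    unfolding b_def by (rule F.restricted_homogenization_mem[OF L(1)])
  have "F.homogenization x = \<phi> x - \<phi>' x" if "x \<in> H" for x
  proof (rule F.homogenization_eq_on_subgroup[OF subgroup_axioms that])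
    show "\<phi> (y [^] n) - \<phi>' (y [^] n) = real n * (\<phi> y - \<phi>' y)" if "y \<in> H" for y n
      using inv_hom_quasimorphisms_nat_pow[OF \<phi> that] inv_homs_nat_pow[OF subgroup_axioms \<phi>' that]
      by (simp add: algebra_simps)
    let ?E = "section_extension G H \<phi> \<one> - \<psi>' \<one> - \<alpha> [H]"
    show "\<bar>F y - (\<phi> y - \<phi>' y)\<bar> \<le> D + \<bar>?E\<bar>" if "y \<in> H" for y
      using section_extension_approx[OF defect that one_closed] \<psi>'[OF that one_closed] that
        abs_ge_self[of ?E] abs_ge_minus_self[of ?E]
      unfolding F_def abs_le_iff by (simp add: rcos_const)
  qed
  moreover have "\<phi> x = 0" "\<phi>' x = 0" if "x \<notin> H" for x
    using \<phi> \<phi>' that unfolding inv_hom_quasimorphisms_def inv_homs_def by auto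
  ultimately have "\<phi> = (\<lambda>x. \<phi>' x + (if x \<in> H then b x else 0))"
    using L(2) by (auto simp: fun_eq_iff b_def)
  then show ?thesis using \<phi>' b by blast
qed

end

theorem proposition5p6:
  fixes G :: "('g, 'b) monoid_scheme" and N :: "'g set"
  assumes "group G" and "N \<lhd> G"
  shows "(fin_dim_ker_comparison (G Mod N) 3 \<and> fin_dim_H2_mod_d2 G N \<longrightarrow>
            (\<forall>L. L \<lhd> G \<and> N \<subseteq> L \<longrightarrow> fin_dim_W G L N))
       \<and> (fin_dim_Hb (G Mod N) 3 \<and> fin_dim_H (G Mod N) 2 \<longrightarrow>
            (\<forall>L. L \<lhd> G \<and> N \<subseteq> L \<longrightarrow> fin_dim_W G L N))"
proof -
  interpret normal N G by (fact assms(2))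
  have main: "fin_dim_W G L N"
    if ker: "fin_dim_ker_comparison (G Mod N) 3" and h2: "fin_dim_H2_mod_d2 G N"
      and L: "L \<lhd> G" "N \<subseteq> L" for L
  proof -
    have "fin_dim_quot (inv_hom_quasimorphisms G N)
        {\<phi> \<in> inv_hom_quasimorphisms G N. section_cochain G N \<phi>
           \<in> {d + \<beta> | d \<beta>. d \<in> d2_image_reps G N \<and> \<beta> \<in> bounded_cochains (G Mod N) 2}}"
      by (rule fin_dim_quot_trans[OF fin_dim_quot_bounded_obstruction[OF ker]
            fin_dim_quot_transgression_mod_bounded[OF h2]]) blast
    then show ?thesis
      unfolding fin_dim_W_def
      by (rule fin_dim_quot_mono) (use inv_hom_quasimorphism_decomposition[OF _ L] in blast)
  qed
  show ?thesis
    using main fin_dim_ker_comparison_if_fin_dim_Hb fin_dim_H2_mod_d2_if_fin_dim_H by blast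
qed

end
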